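(* Let $M\ge\frac52$, $\mu=\frac{2}{2M+3}$, and consider Algorithm A run on an input whose optimal offline makespan is $1$. Fix any optimal offline schedule $S$ of the entire input (makespan $1$), and for each $j$ let $o_{j2}$ be the total size of those jobs among $1,\dots,j$ that $S$ assigns to $m_2$. Then for every $j\ge 0$, $y_j\ge \min\{1-\mu,\,o_{j2}\}$.
   Context: Model (two hierarchical machines with migration, bin stretching). Jobs $1,2,\dots,n$ arrive one by one ($n$ unknown in advance). Job $j$ has a size $p_j>0$ and a grade of service (GoS) $g_j\in\{1,2\}$; a job of GoS $1$ may only be processed on machine $m_1$, a job of GoS $2$ may be processed on $m_1$ or on $m_2$. The load of a machine is the total size of the jobs assigned to it, and the makespan is the maximum load. When job $j$ arrives, the algorithm must assign it to a machine, and at the same time it may reassign (migrate) previously arrived jobs to other machines (respecting the GoS constraints), provided that the total size of the migrated jobs is at most $M\cdot p_j$; $M\ge 0$ is the migration factor. Bin stretching: the optimal offline makespan of the complete input is known in advance and scaled to $1$. Notation: $Y_{j}$ is the set of jobs on $m_2$ just after job $j$ has been handled (including migrations), $y_j$ its total size, $y_0=0$. $Z$ denotes the set of GoS-2 jobs currently on $m_1$. Algorithm A (with $\mu=\frac{2}{2M+3}$). On arrival of job $j$: (i) if $g_j=1$ or $y_{j-1}\ge 1-\mu$, assign $j$ to $m_1$; (ii) else if $y_{j-1}+p_j\le 1+\mu$, assign $j$ to $m_2$; (iii) otherwise, among all GoS-2 jobs arrived so far (the current $Z$, the current $Y_{j-1}$, and $j$), choose a subset $W$ of maximum total size subject to total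 size at most $1$; rearrange so that exactly the jobs of $W$ are on $m_2$ and all other arrived jobs are on $m_1$. *)

theory Defs
  imports Complex_Main
begin

text \<open>Jobs are numbered 1..n; p j is the size, g j the grade of service (1 or 2).
  A schedule is a function assigning each job a machine index 1 or 2.\<close>

definition load :: "(nat \<Rightarrow> real) \<Rightarrow> nat \<Rightarrow> (nat \<Rightarrow> nat) \<Rightarrow> nat \<Rightarrow> real" where
  "load p n S m = (\<Sum>j \<in> {j \<in> {1..n}. S j = m}. p j)"

definition feasible_schedule :: "(nat \<Rightarrow> nat) \<Rightarrow> nat \<Rightarrow> (nat \<Rightarrow> nat) \<Rightarrow> bool" where
  "feasible_schedule g n S \<longleftrightarrow> (\<forall>j \<in> {1..n}. S j \<in> {1, 2} \<and> (g j = 1 \<longrightarrow> S j = 1))"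

definition makespan :: "(nat \<Rightarrow> real) \<Rightarrow> nat \<Rightarrow> (nat \<Rightarrow> nat) \<Rightarrow> real" where
  "makespan p n S = max (load p n S 1) (load p n S 2)"

definition opt_is_one :: "(nat \<Rightarrow> real) \<Rightarrow> (nat \<Rightarrow> nat) \<Rightarrow> nat \<Rightarrow> bool" where
  "opt_is_one p g n \<longleftrightarrow>
     (\<exists>S. feasible_schedule g n S \<and> makespan p n S = 1) \<and>
     (\<forall>S. feasible_schedule g n S \<longrightarrow> makespan p n S \<ge> 1)"

definition mu :: "real \<Rightarrow> real" where
  "mu M = 2 / (2 * M + 3)"

text \<open>One step of Algorithm A: job j arrives; Yprev is the set of jobs on m2 before,
  Ynew the set of jobs on m2 afterwards (all other arrived jobs are on m1).\<close>
definition alg_step :: "real \<Rightarrow> (nat \<Rightarrow> real) \<Rightarrow> (nat \<Rightarrow> nat) \<Rightarrow> nat \<Rightarrow> nat set \<Rightarrow> nat set \<Rightarrow> bool" where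
  "alg_step M p g j Yprev Ynew \<longleftrightarrow>
     (let y = (\<Sum>i\<in>Yprev. p i);
          Z = {i \<in> {1..<j}. g i = 2 \<and> i \<notin> Yprev};
          C = Z \<union> Yprev \<union> {j}
      in if g j = 1 \<or> y \<ge> 1 - mu M then Ynew = Yprev
         else if y + p j \<le> 1 + mu M then Ynew = insert j Yprev
         else (Ynew \<subseteq> C \<and> (\<Sum>i\<in>Ynew. p i) \<le> 1 \<and>
               (\<forall>W \<subseteq> C. (\<Sum>i\<in>W. p i) \<le> 1 \<longrightarrow> (\<Sum>i\<in>W. p i) \<le> (\<Sum>i\<in>Ynew. p i))))"

text \<open>Y is a run of Algorithm A on jobs 1..n: Y j is the set of jobs on m2 after job j
  has been handled (including migrations).\<close>
definition alg_run :: "real \<Rightarrow> (nat \<Rightarrow> real) \<Rightarrow> (nat \<Rightarrow> nat) \<Rightarrow> nat \<Rightarrow> (nat \<Rightarrow> nat set) \<Rightarrow> bool" where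
  "alg_run M p g n Y \<longleftrightarrow> Y 0 = {} \<and> (\<forall>j \<in> {1..n}. alg_step M p g j (Y (j - 1)) (Y j))"

end

theory Submission
  imports Defs
begin

text \<open>Induction on j, with the paper's o_{j2} being load p j S 2. While m2 holds less
  than 1 - mu, the algorithm either adds each GoS-2 job to m2 (so y grows at least as fast
  as o) or repacks; then the jobs S has put on m2 so far are GoS-2 jobs of total size at
  most 1, so the maximal repacking is at least o. Once y \<ge> 1 - mu, nothing leaves m2.\<close>

lemma alg_step_cases:
  assumes "alg_step M p g j Yp Yn"
  obtains (keep) "Yn = Yp" "g j = 1 \<or> sum p Yp \<ge> 1 - mu M"
    | (insert) "Yn = insert j Yp" "g j \<noteq> 1" "sum p Yp < 1 - mu M"
    | (repack) "Yn \<subseteq> {i \<in> {1..<j}. g i = 2 \<and> i \<notin> Yp} \<union> Yp \<union> {j}"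
        "\<forall>W \<subseteq> {i \<in> {1..<j}. g i = 2 \<and> i \<notin> Yp} \<union> Yp \<union> {j}.
           sum p W \<le> 1 \<longrightarrow> sum p W \<le> sum p Yn"
  using assms unfolding alg_step_def Let_def by (metis (no_types, lifting) not_le)

lemma alg_run_step:
  assumes "alg_run M p g n Y" "Suc k \<le> n"
  shows "alg_step M p g (Suc k) (Y k) (Y (Suc k))"
proof -
  have "Suc k \<in> {1..n}" using assms(2) by simp
  then show ?thesis using assms(1) unfolding alg_run_def by fastforce
qed

lemma alg_run_subset:
  assumes "alg_run M p g n Y" "k \<le> n"
  shows "Y k \<subseteq> {1..k}"
  using assms(2)
proof (induction k)
  case 0
  then show ?case using assms(1) by (simp add: alg_run_def)
next
  case (Suc k)
  then have Yk: "Y k \<subseteq> {1..Suc k}" by auto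
  then have C: "{i \<in> {1..<Suc k}. g i = 2 \<and> i \<notin> Y k} \<union> Y k \<union> {Suc k} \<subseteq> {1..Suc k}"
    by auto
  from alg_run_step[OF assms(1) Suc.prems] show ?case
  proof (cases rule: alg_step_cases)
    case repack
    with C show ?thesis by blast
  qed (use Yk in auto)
qed

lemma load_Suc:
  "load p (Suc k) S m = load p k S m + (if S (Suc k) = m then p (Suc k) else 0)"
proof -
  have "{j \<in> {1..Suc k}. S j = m} =
        (if S (Suc k) = m then insert (Suc k) {j \<in> {1..k}. S j = m} else {j \<in> {1..k}. S j = m})"
    by (auto simp: le_Suc_eq)
  then show ?thesis by (simp add: load_def)
qed

lemma load_mono:
  assumes "\<forall>j \<in> {1..n}. p j \<ge> 0" "k \<le> n"
  shows "load p k S m \<le> load p n S m"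
  unfolding load_def by (rule sum_mono2) (use assms in auto)

lemma alg_run_lower_bound:
  assumes nonneg: "\<forall>j \<in> {1..n}. p j \<ge> 0"
    and gos: "\<forall>j \<in> {1..n}. g j \<in> {1, 2}"
    and run: "alg_run M p g n Y"
    and feas: "feasible_schedule g n S" and load2: "load p n S 2 \<le> 1"
    and "k \<le> n"
  shows "min (1 - mu M) (load p k S 2) \<le> sum p (Y k)"
  using \<open>k \<le> n\<close>
proof (induction k)
  case 0
  then show ?case using run by (simp add: alg_run_def load_def)
next
  case (Suc k)
  let ?o = "load p k S 2"
  have IH: "min (1 - mu M) ?o \<le> sum p (Y k)" using Suc by simp
  have fresh: "Suc k \<notin> Y k" and fin: "finite (Y k)"
    using alg_run_subset[OF run, of k] Suc.prems finite_subset by auto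
  have S_gos: "S i = 2 \<Longrightarrow> g i = 2" if "i \<in> {1..n}" for i
    using feas gos that unfolding feasible_schedule_def by force
  show ?case
    using alg_run_step[OF run Suc.prems]
  proof (cases rule: alg_step_cases)
    case keep
    then consider "g (Suc k) = 1" | "sum p (Y k) \<ge> 1 - mu M" by blast
    then show ?thesis
    proof cases
      case 1
      then have "S (Suc k) = 1" using feas Suc.prems unfolding feasible_schedule_def by auto
      then show ?thesis using IH keep by (simp add: load_Suc)
    qed (use keep in simp)
  next
    case insert
    then have "?o \<le> sum p (Y k)" using IH by linarith
    moreover have "p (Suc k) \<ge> 0" using nonneg Suc.prems by simp
    ultimately show ?thesis using insert fresh fin by (simp add: load_Suc min_le_iff_disj)
  next
    case repack
    have "{i \<in> {1..Suc k}. S i = 2} \<subseteq> {i \<in> {1..<Suc k}. g i = 2 \<and> i \<notin> Y k} \<union> Y k \<union> {Suc k}"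
      using S_gos Suc.prems by (auto simp: le_Suc_eq)
    moreover have "load p (Suc k) S 2 \<le> 1"
      using load_mono[OF nonneg Suc.prems, of S 2] load2 by linarith
    ultimately have "load p (Suc k) S 2 \<le> sum p (Y (Suc k))"
      using repack(2) unfolding load_def by blast
    then show ?thesis by simp
  qed
qed

theorem mainTheorem2:
  fixes M :: real and p :: "nat \<Rightarrow> real" and g :: "nat \<Rightarrow> nat" and n :: nat
    and Y :: "nat \<Rightarrow> nat set" and S :: "nat \<Rightarrow> nat"
  assumes "M \<ge> 5 / 2"
    and "\<forall>j \<in> {1..n}. p j > 0"
    and "\<forall>j \<in> {1..n}. g j \<in> {1, 2}"
    and "opt_is_one p g n"
    and "alg_run M p g n Y"
    and "feasible_schedule g n S" and "makespan p n S = 1"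
  shows "\<forall>j \<le> n. (\<Sum>i\<in>Y j. p i) \<ge> min (1 - mu M) (\<Sum>i \<in> {i \<in> {1..j}. S i = 2}. p i)"
proof (intro allI impI)
  fix j assume "j \<le> n"
  have "\<forall>j \<in> {1..n}. p j \<ge> 0" using assms(2) by (simp add: less_imp_le)
  moreover have "load p n S 2 \<le> 1" using assms(7) by (simp add: makespan_def)
  ultimately have "min (1 - mu M) (load p j S 2) \<le> sum p (Y j)"
    using alg_run_lower_bound assms(3,5,6) \<open>j \<le> n\<close> by blast
  then show "(\<Sum>i\<in>Y j. p i) \<ge> min (1 - mu M) (\<Sum>i \<in> {i \<in> {1..j}. S i = 2}. p i)"
    by (simp add: load_def)
qed

end
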